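(* Let $\mathbb{F}\in\{\mathbb{R},\mathbb{C}\}$, let $A$ be an $n\times m$ matrix over $\mathbb{F}$, let $p,q\in(1,\infty]$, and let $\sigma$ be the largest $\ell_1$ norm of the columns of $A$ (so $\sigma=\|A\|_{1,1}$). If $A\in\mathcal{E}_{1,1}(p,q)$, then (i) the entries of any column whose $\ell_1$ norm equals $\sigma$ all have the same absolute value $n^{-1}\sigma$; (ii) every column with this property is orthogonal to all the other columns of $A$; (iii) $\sigma=n^{1-(1/q)}\|A\|_{p,q}$. Conversely, if $A$ has a column all of whose entries have absolute value $n^{-1/q}\|A\|_{p,q}$, then $A\in\mathcal{E}_{1,1}(p,q)$. If $p>2$ and $A\neq0$, then $A\in\mathcal{E}_{1,1}(p,q)$ if and only if $A$ has only one nonzero column and all entries of this column have the same absolute value.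
   Context: $\|x\|_p$ is the Hölder $\ell_p$ norm; $\|A\|_{p,q}=\max_{x\in\mathbb{F}^m,x\ne0}\|Ax\|_q/\|x\|_p$ (for real $A$ one may use $\mathbb{F}=\mathbb{R}$ or $\mathbb{C}$); $1/\infty=0$. Orthogonality is with respect to $\langle a,b\rangle=\sum_i a_i\overline{b_i}$. For $p,q\in(1,\infty]$, $\mathcal{E}_{1,1}(p,q)$ is the set of $n\times m$ matrices $A$ with $\|A\|_{r,s}=n^{(1/s)-(1/q)}\|A\|_{p,q}$ for all $r\in[1,p)$ and $s\in[1,q)$. *)

theory Defs
  imports "HOL-Analysis.Analysis"
begin

definition lpnorm :: "ereal \<Rightarrow> complex^'n \<Rightarrow> real" where
  "lpnorm p x = (if p = \<infinity> then Max (range (\<lambda>i. norm (x$i)))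
     else (\<Sum>i\<in>UNIV. norm (x$i) powr real_of_ereal p) powr (1 / real_of_ereal p))"

definition inv_exp :: "ereal \<Rightarrow> real" where
  "inv_exp p = (if p = \<infinity> then 0 else 1 / real_of_ereal p)"

text \<open>Operator norm ||A||_{p,q} where the test vectors range over F^m
  (F is the scalar field, given as a subset of the complex numbers: either the reals or all of C).\<close>
definition opnorm :: "complex set \<Rightarrow> ereal \<Rightarrow> ereal \<Rightarrow> complex^'m^'n \<Rightarrow> real" where
  "opnorm F p q A = (SUP x\<in>{x :: complex^'m. x \<noteq> 0 \<and> (\<forall>i. x$i \<in> F)}.
       lpnorm q (A *v x) / lpnorm p x)"

definition E11 :: "complex set \<Rightarrow> ereal \<Rightarrow> ereal \<Rightarrow> complex^'m^'n \<Rightarrow> bool" where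
  "E11 F p q A = (\<forall>r s :: real. 1 \<le> r \<and> ereal r < p \<and> 1 \<le> s \<and> ereal s < q \<longrightarrow>
       opnorm F (ereal r) (ereal s) A
         = real CARD('n) powr (1 / s - inv_exp q) * opnorm F p q A)"

definition colnorm1 :: "complex^'m^'n \<Rightarrow> 'm \<Rightarrow> real" where
  "colnorm1 A j = (\<Sum>i\<in>UNIV. norm (A$i$j))"

definition maxcol1 :: "complex^'m^'n \<Rightarrow> real" where
  "maxcol1 A = Max (range (colnorm1 A))"

end

theory Submission
  imports Defs
begin

(* For r = s = 1 the operator norm is the largest column l_1 norm sigma, so
   membership in E_{1,1}(p,q) gives (iii), and then ||A||_{r,s} = n^{1/s} sigma/n for all
   r < p and s < q. Testing ||A||_{1,s} with 1 < s <= 2 on the unit vector of a maximal column j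
   bounds the l_s norm of that column by n^{1/s} sigma/n, while its l_1 norm is sigma; by strict
   convexity of x^s all its entries then have modulus K = sigma/n, which is (i).
   For the test vector e_j + t u e_k, the l_1 norm of the image is at least n K + t Re(u z)/K,
   z being the inner product of the columns k and j, whereas ||e_j + t u e_k||_r is at most
   1 + (t |u|)^r; taking u = conj z and r > 1 gives z = 0, which is (ii).
   For p > 2 one may take r > 2 and s > 1: the first-order terms now cancel by (ii), the quadratic
   term of the convex x^s gains order t^2 and the test vector loses only order t^r, so every
   product A_ik conj(A_ij) vanishes and column k is zero.
   Conversely, a column of constant modulus n^{-1/q} ||A||_{p,q} attains n^{1/s - 1/q} ||A||_{p,q}
   in ||A||_{r,s}, and the comparison ||y||_s <= n^{1/s - 1/q} ||y||_q of Hoelder norms gives the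
   reverse bound. *)

section \<open>Inequalities for real powers\<close>

lemma powr_ge_tangent:
  fixes e m y :: real
  assumes "1 \<le> e" "0 < m" "0 \<le> y"
  shows "m powr e + e * m powr (e - 1) * (y - m) \<le> y powr e"
proof (cases "y = 0")
  case True
  have "m powr e = m powr (e - 1) * m"
    using \<open>0 < m\<close> by (simp add: powr_diff)
  then show ?thesis
    using True assms by (simp add: algebra_simps)
next
  case False
  have "e * m powr (e - 1) * (y - m) \<le> y powr e - m powr e"
  proof (rule f''_imp_f'[where C = "{0<..}" and f'' = "\<lambda>x. e * ((e - 1) * x powr (e - 1 - 1))"])
    show "((\<lambda>x. x powr e) has_real_derivative e * x powr (e - 1)) (at x)"
      and "((\<lambda>x. e * x powr (e - 1)) has_real_derivative e * ((e - 1) * x powr (e - 1 - 1))) (at x)"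
      if "x \<in> {0<..}" for x
      using that by (intro derivative_eq_intros | simp)+
  qed (use assms False in auto)
  then show ?thesis
    by simp
qed

lemma powr_ge_tangent_plus_quadratic:
  fixes s K V v :: real
  assumes s: "1 < s" "s \<le> 2" and K: "0 < K" "K \<le> V" and v: "0 \<le> v" "v \<le> V"
  shows "K powr s + s * K powr (s - 1) * (v - K) + (s - 1) * V powr (s - 2) / 2 * (v - K)\<^sup>2
    \<le> v powr s"
proof -
  define k where "k = (s - 1) * V powr (s - 2) / 2"
  have k_le: "2 * k \<le> s * ((s - 1) * x powr (s - 1 - 1))" if "0 < x" "x \<le> V" for x
  proof -
    have "V powr (s - 2) \<le> x powr (s - 2)"
      using that s by (intro powr_mono2') auto
    then have "2 * k \<le> (s - 1) * x powr (s - 2)"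
      unfolding k_def using s by (simp add: mult_left_mono)
    also have "\<dots> \<le> s * ((s - 1) * x powr (s - 2))"
      using s mult_right_mono[of 1 s "(s - 1) * x powr (s - 2)"] by simp
    finally show ?thesis
      by (simp add: diff_diff_eq)
  qed
  have K_powr: "K powr (s - 1) * K = K powr s"
    using K by (simp add: powr_diff)
  show ?thesis
  proof (cases "v = 0")
    case True
    have "k * K\<^sup>2 \<le> s * ((s - 1) * K powr (s - 2)) / 2 * K\<^sup>2"
      using k_le[of K] K by (intro mult_right_mono) (auto simp: diff_diff_eq)
    also have "\<dots> = s * (s - 1) * K powr s / 2"
      using K by (simp add: powr_diff power2_eq_square)
    also have "\<dots> \<le> (s - 1) * K powr s"
      using s mult_right_mono[of s 2 "(s - 1) * K powr s"] by simp
    finally show ?thesis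
      using True K_powr unfolding k_def[symmetric] by (simp add: algebra_simps power2_eq_square)
  next
    case False
    have "(s * K powr (s - 1) - 2 * k * K) * (v - K) \<le> (v powr s - k * v\<^sup>2) - (K powr s - k * K\<^sup>2)"
    proof (rule f''_imp_f'[where C = "{0<..V}" and f'' = "\<lambda>x. s * ((s - 1) * x powr (s - 1 - 1)) - 2 * k"])
      show "((\<lambda>x. x powr s - k * x\<^sup>2) has_real_derivative s * x powr (s - 1) - 2 * k * x) (at x)"
        and "((\<lambda>x. s * x powr (s - 1) - 2 * k * x) has_real_derivative
                s * ((s - 1) * x powr (s - 1 - 1)) - 2 * k) (at x)"
        if "x \<in> {0<..V}" for x
        using that by (intro derivative_eq_intros | simp)+
    qed (use k_le K v False in auto)
    then show ?thesis
      unfolding k_def[symmetric] by (simp add: algebra_simps power2_eq_square flip: K_powr)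
  qed
qed

lemma mean_powr_le_mean_of_powr:
  fixes a :: "'i::finite \<Rightarrow> real"
  assumes e: "1 \<le> e" and a: "\<And>i. 0 \<le> a i"
  shows "((\<Sum>i\<in>UNIV. a i) / CARD('i)) powr e \<le> (\<Sum>i\<in>UNIV. a i powr e) / CARD('i)"
proof -
  define m where "m = (\<Sum>i\<in>UNIV. a i) / CARD('i)"
  have "m \<ge> 0"
    unfolding m_def using a by (simp add: sum_nonneg)
  show ?thesis
  proof (cases "m = 0")
    case True
    then show ?thesis
      unfolding m_def[symmetric] by (simp add: sum_nonneg)
  next
    case False
    with \<open>m \<ge> 0\<close> have "0 < m" by simp
    have "(\<Sum>i\<in>UNIV. m powr e + e * m powr (e - 1) * (a i - m)) \<le> (\<Sum>i\<in>UNIV. a i powr e)"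
      using e a \<open>0 < m\<close> by (intro sum_mono powr_ge_tangent) auto
    moreover have "(\<Sum>i\<in>UNIV. m powr e + e * m powr (e - 1) * (a i - m)) = CARD('i) * m powr e"
      unfolding m_def by (simp add: sum.distrib sum_subtractf flip: sum_distrib_left)
    ultimately show ?thesis
      unfolding m_def[symmetric] by (simp add: field_simps)
  qed
qed

lemma power_mean_mono:
  fixes a :: "'i::finite \<Rightarrow> real"
  assumes s: "1 \<le> s" "s \<le> q" and a: "\<And>i. 0 \<le> a i"
  shows "((\<Sum>i\<in>UNIV. a i powr s) / CARD('i)) powr (1 / s)
    \<le> ((\<Sum>i\<in>UNIV. a i powr q) / CARD('i)) powr (1 / q)"
proof -
  have "((\<Sum>i\<in>UNIV. a i powr s) / CARD('i)) powr (q / s) \<le> (\<Sum>i\<in>UNIV. (a i powr s) powr (q / s)) / CARD('i)"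
    using s by (intro mean_powr_le_mean_of_powr) auto
  also have "\<dots> = (\<Sum>i\<in>UNIV. a i powr q) / CARD('i)"
    using s by (simp add: powr_powr)
  finally have "(((\<Sum>i\<in>UNIV. a i powr s) / CARD('i)) powr (q / s)) powr (1 / q)
      \<le> ((\<Sum>i\<in>UNIV. a i powr q) / CARD('i)) powr (1 / q)"
    using s by (intro powr_mono2) (auto simp: sum_nonneg)
  then show ?thesis
    using s by (simp add: powr_powr sum_nonneg)
qed

lemma sum_powr_ge_quadratic:
  fixes v :: "'i::finite \<Rightarrow> real" and s K V :: real
  assumes s: "1 < s" "s \<le> 2" and K: "0 < K" "K \<le> V" and v: "\<And>i. 0 \<le> v i \<and> v i \<le> V"
    and sum_v: "(\<Sum>i\<in>UNIV. v i) = CARD('i) * K"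
  shows "CARD('i) * K powr s + (s - 1) * V powr (s - 2) / 2 * (\<Sum>i\<in>UNIV. (v i - K)\<^sup>2)
    \<le> (\<Sum>i\<in>UNIV. v i powr s)"
proof -
  define k where "k = (s - 1) * V powr (s - 2) / 2"
  have "CARD('i) * K powr s + k * (\<Sum>i\<in>UNIV. (v i - K)\<^sup>2)
      = (\<Sum>i\<in>UNIV. K powr s + s * K powr (s - 1) * (v i - K) + k * (v i - K)\<^sup>2)"
    using sum_v by (simp add: sum.distrib sum_subtractf flip: sum_distrib_left)
  also have "\<dots> \<le> (\<Sum>i\<in>UNIV. v i powr s)"
    unfolding k_def using s K v by (intro sum_mono powr_ge_tangent_plus_quadratic) auto
  finally show ?thesis
    unfolding k_def .
qed

lemma eq_mean_if_sum_powr_le: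
  fixes v :: "'i::finite \<Rightarrow> real" and s K V :: real
  assumes s: "1 < s" "s \<le> 2" and K: "0 < K" "K \<le> V" and v: "\<And>i. 0 \<le> v i \<and> v i \<le> V"
    and sum_v: "(\<Sum>i\<in>UNIV. v i) = CARD('i) * K"
    and sum_powr: "(\<Sum>i\<in>UNIV. v i powr s) \<le> CARD('i) * K powr s"
  shows "v i = K"
proof -
  define k where "k = (s - 1) * V powr (s - 2) / 2"
  have "0 < k"
    unfolding k_def using s K by simp
  moreover have "k * (\<Sum>i\<in>UNIV. (v i - K)\<^sup>2) \<le> 0"
    using sum_powr_ge_quadratic[OF s K v sum_v] sum_powr unfolding k_def by simp
  ultimately have "(\<Sum>i\<in>UNIV. (v i - K)\<^sup>2) \<le> 0"
    by (simp add: mult_le_0_iff)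
  then have "(v i - K)\<^sup>2 \<le> 0"
    by (rule order_trans[rotated]) (auto intro: member_le_sum)
  then show ?thesis
    by simp
qed

lemma nonpos_if_le_powr_near_0:
  fixes a C \<alpha> \<delta> :: real
  assumes "0 < \<alpha>" "0 < \<delta>" and le: "\<And>t. 0 < t \<Longrightarrow> t < \<delta> \<Longrightarrow> a \<le> C * t powr \<alpha>"
  shows "a \<le> 0"
proof (rule tendsto_le[OF trivial_limit_at_right_real])
  show "((\<lambda>t. C * t powr \<alpha>) \<longlongrightarrow> 0) (at_right 0)"
    using \<open>0 < \<alpha>\<close>
    by (intro tendsto_mult_right_zero tendsto_zero_powrI tendsto_ident_at eventually_at_rightI[of 0 1])
      auto
  show "\<forall>\<^sub>F t in at_right 0. a \<le> C * t powr \<alpha>"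
    using eventually_at_right_real[OF \<open>0 < \<delta>\<close>] by eventually_elim (use le in auto)
qed simp

section \<open>Hoelder norms\<close>

lemma lpnorm_ereal: "lpnorm (ereal p) x = (\<Sum>i\<in>UNIV. norm (x$i) powr p) powr (1 / p)"
  by (simp add: lpnorm_def)

lemma lpnorm_infinity: "lpnorm \<infinity> x = Max (range (\<lambda>i. norm (x$i)))"
  by (simp add: lpnorm_def)

lemma ereal_ge_1_cases:
  assumes "1 \<le> (p::ereal)"
  obtains "p = \<infinity>" | r where "p = ereal r" "1 \<le> r"
  using assms by (cases p) auto

lemma lpnorm_1: "lpnorm 1 x = (\<Sum>i\<in>UNIV. norm (x$i))"
  by (simp add: one_ereal_def lpnorm_ereal sum_nonneg)

lemma lpnorm_powr: "1 \<le> p \<Longrightarrow> lpnorm (ereal p) x powr p = (\<Sum>i\<in>UNIV. norm (x$i) powr p)"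
  by (simp add: lpnorm_ereal powr_powr sum_nonneg)

lemma norm_nth_le_lpnorm:
  assumes "1 \<le> p"
  shows "norm (x$i) \<le> lpnorm p x"
  using assms
proof (cases rule: ereal_ge_1_cases)
  case 1
  then show ?thesis
    by (simp add: lpnorm_infinity)
next
  case (2 r)
  have "norm (x$i) = (norm (x$i) powr r) powr (1 / r)"
    using 2 by (simp add: powr_powr)
  also have "\<dots> \<le> (\<Sum>l\<in>UNIV. norm (x$l) powr r) powr (1 / r)"
    using 2 by (intro powr_mono2 member_le_sum) auto
  finally show ?thesis
    using 2 by (simp add: lpnorm_ereal)
qed

lemma lpnorm_nonneg: "1 \<le> p \<Longrightarrow> 0 \<le> lpnorm p x"
  using norm_nth_le_lpnorm[of p x undefined] norm_ge_zero order_trans by blast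

lemma lpnorm_pos:
  assumes "1 \<le> p" "x \<noteq> 0"
  shows "0 < lpnorm p x"
proof -
  obtain i where "x$i \<noteq> 0"
    using assms(2) by (metis vec_eq_iff zero_index)
  then show ?thesis
    using norm_nth_le_lpnorm[OF assms(1), of x i] by (meson less_le_trans zero_less_norm_iff)
qed

lemma lpnorm_antimono:
  assumes r: "1 \<le> r" "ereal r \<le> p"
  shows "lpnorm p x \<le> lpnorm (ereal r) x"
proof -
  define M where "M = lpnorm (ereal r) x"
  have "1 \<le> p"
    using r order_trans[of 1 "ereal r" p] by simp
  then show ?thesis
  proof (cases rule: ereal_ge_1_cases)
    case 1
    have "Max (range (\<lambda>i. norm (x$i))) \<in> range (\<lambda>i. norm (x$i))"
      by (intro Max_in) auto
    then obtain i where "Max (range (\<lambda>i. norm (x$i))) = norm (x$i)"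
      by blast
    then show ?thesis
      using 1 r norm_nth_le_lpnorm[of "ereal r" x i] by (simp add: lpnorm_infinity)
  next
    case (2 p')
    have "M \<ge> 0"
      unfolding M_def using r by (simp add: lpnorm_nonneg)
    have "(\<Sum>i\<in>UNIV. norm (x$i) powr p') = (\<Sum>i\<in>UNIV. norm (x$i) powr r * norm (x$i) powr (p' - r))"
      by (simp flip: powr_add)
    also have "\<dots> \<le> (\<Sum>i\<in>UNIV. norm (x$i) powr r * M powr (p' - r))"
      unfolding M_def using r 2 norm_nth_le_lpnorm[of "ereal r" x]
      by (intro sum_mono mult_left_mono powr_mono2) auto
    also have "\<dots> = M powr p'"
      unfolding M_def using r by (simp flip: sum_distrib_right lpnorm_powr powr_add)
    finally have "(\<Sum>i\<in>UNIV. norm (x$i) powr p') powr (1 / p') \<le> (M powr p') powr (1 / p')"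
      using 2 by (intro powr_mono2) (auto simp: sum_nonneg)
    then show ?thesis
      using 2 \<open>M \<ge> 0\<close> by (simp add: lpnorm_ereal powr_powr M_def)
  qed
qed

lemma lpnorm_const_norm:
  fixes x :: "complex^'n"
  assumes p: "1 \<le> p" and c: "\<And>i. norm (x$i) = c"
  shows "lpnorm p x = CARD('n) powr inv_exp p * c"
  using p
proof (cases rule: ereal_ge_1_cases)
  case 1
  have "range (\<lambda>i. norm (x$i)) = {c}"
    using c by auto
  then show ?thesis
    using 1 by (simp add: lpnorm_infinity inv_exp_def)
next
  case (2 r)
  have "0 \<le> c"
    using c[of undefined] norm_ge_zero by metis
  then show ?thesis
    using 2 c by (simp add: lpnorm_ereal inv_exp_def powr_mult powr_powr)
qed

lemma lpnorm_le_card_powr_lpnorm: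
  fixes y :: "complex^'n"
  assumes s: "1 \<le> s" "ereal s \<le> q"
  shows "lpnorm (ereal s) y \<le> CARD('n) powr (1 / s - inv_exp q) * lpnorm q y"
proof -
  define n where "n = real CARD('n)"
  define S where "S = (\<Sum>i\<in>UNIV. norm (y$i) powr s)"
  have "0 < n" "0 \<le> S"
    unfolding n_def S_def by (auto simp: sum_nonneg)
  have "1 \<le> q"
    using s order_trans[of 1 "ereal s" q] by simp
  then show ?thesis
  proof (cases rule: ereal_ge_1_cases)
    case 1
    define M where "M = lpnorm q y"
    have "0 \<le> M"
      unfolding M_def using \<open>1 \<le> q\<close> by (rule lpnorm_nonneg)
    have "S \<le> of_nat (card (UNIV :: 'n set)) * M powr s"
      unfolding S_def M_def using s norm_nth_le_lpnorm[OF \<open>1 \<le> q\<close>, of y]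
      by (intro sum_bounded_above powr_mono2) auto
    then have "S \<le> n * M powr s"
      by (simp add: n_def)
    then have "S powr (1 / s) \<le> (n * M powr s) powr (1 / s)"
      using s \<open>0 \<le> S\<close> by (intro powr_mono2) auto
    also have "\<dots> = n powr (1 / s) * M"
      using s \<open>0 \<le> M\<close> \<open>0 < n\<close> by (simp add: powr_mult powr_powr)
    finally show ?thesis
      using 1 s by (simp add: lpnorm_ereal inv_exp_def n_def M_def S_def)
  next
    case (2 q')
    define T where "T = (\<Sum>i\<in>UNIV. norm (y$i) powr q')"
    have "S powr (1 / s) = n powr (1 / s) * (S / n) powr (1 / s)"
      using \<open>0 \<le> S\<close> \<open>0 < n\<close> by (simp add: powr_divide)
    also have "\<dots> \<le> n powr (1 / s) * (T / n) powr (1 / q')"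
      unfolding S_def T_def n_def using s 2 by (intro mult_left_mono power_mean_mono) auto
    also have "\<dots> = n powr (1 / s - 1 / q') * T powr (1 / q')"
      using \<open>0 < n\<close> by (simp add: powr_divide powr_diff)
    finally show ?thesis
      using 2 s by (simp add: lpnorm_ereal inv_exp_def n_def S_def T_def)
  qed
qed

lemma lpnorm_axis_1:
  assumes "1 \<le> p"
  shows "lpnorm p (axis j 1) = 1"
  using assms
proof (cases rule: ereal_ge_1_cases)
  case 1
  have "Max (range (\<lambda>i. norm (axis j (1::complex) $ i))) = 1"
    by (rule Max_eqI) (auto simp: axis_def)
  then show ?thesis
    using 1 by (simp add: lpnorm_infinity)
next
  case (2 r)
  have "(\<Sum>i\<in>UNIV. norm (axis j (1::complex) $ i) powr r) = (\<Sum>i\<in>UNIV. if i = j then 1 else 0)"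
    using 2 by (intro sum.cong) (auto simp: axis_def)
  then show ?thesis
    using 2 by (simp add: lpnorm_ereal)
qed

lemma lpnorm_axis_add_axis_powr_le:
  assumes r: "1 \<le> r" and a: "0 < a" "a \<le> r" and "j \<noteq> k"
  shows "lpnorm (ereal r) (axis j 1 + axis k \<tau>) powr a \<le> 1 + norm \<tau> powr r"
proof -
  have "(\<Sum>i\<in>UNIV. norm ((axis j 1 + axis k \<tau>) $ i) powr r)
      = (\<Sum>i\<in>UNIV. (if i = j then 1 else 0) + (if i = k then norm \<tau> powr r else 0))"
    using r \<open>j \<noteq> k\<close> by (intro sum.cong) (auto simp: axis_def)
  then have "lpnorm (ereal r) (axis j 1 + axis k \<tau>) powr a = (1 + norm \<tau> powr r) powr (a / r)"
    using r by (simp add: lpnorm_ereal sum.distrib powr_powr)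
  also have "\<dots> \<le> 1 + norm \<tau> powr r"
    using r a powr_mono[of "a / r" 1 "1 + norm \<tau> powr r"] by simp
  finally show ?thesis .
qed


section \<open>The operator norm\<close>

lemma colnorm1_le_maxcol1: "colnorm1 A j \<le> maxcol1 A"
  unfolding maxcol1_def by (rule Max_ge) auto

lemma ex_colnorm1_eq_maxcol1: "\<exists>j. colnorm1 A j = maxcol1 A"
proof -
  have "maxcol1 A \<in> range (colnorm1 A)"
    unfolding maxcol1_def by (rule Max_in) auto
  then show ?thesis
    by auto
qed

lemma maxcol1_pos:
  assumes "A \<noteq> 0"
  shows "0 < maxcol1 A"
proof -
  obtain i k where "A$i$k \<noteq> 0"
    using assms by (metis vec_eq_iff zero_index)
  then have "0 < norm (A$i$k)"
    by simp
  also have "\<dots> \<le> colnorm1 A k"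
    unfolding colnorm1_def by (rule member_le_sum) auto
  also have "\<dots> \<le> maxcol1 A"
    by (rule colnorm1_le_maxcol1)
  finally show ?thesis .
qed

lemma lpnorm_1_column: "lpnorm 1 (column j A) = colnorm1 A j"
  by (simp add: lpnorm_1 colnorm1_def column_def)

lemma lpnorm_1_mult_le: "lpnorm 1 (A *v x) \<le> (\<Sum>j\<in>UNIV. norm (x$j) * colnorm1 A j)"
proof -
  have "lpnorm 1 (A *v x) = (\<Sum>i\<in>UNIV. norm (\<Sum>j\<in>UNIV. A$i$j * x$j))"
    by (simp add: lpnorm_1 matrix_vector_mult_def)
  also have "\<dots> \<le> (\<Sum>i\<in>UNIV. \<Sum>j\<in>UNIV. norm (A$i$j) * norm (x$j))"
    by (intro sum_mono order_trans[OF norm_sum]) (simp add: norm_mult)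
  also have "\<dots> = (\<Sum>j\<in>UNIV. norm (x$j) * colnorm1 A j)"
    by (subst sum.swap) (simp add: colnorm1_def sum_distrib_left mult.commute)
  finally show ?thesis .
qed

lemma matrix_vector_mult_axis:
  fixes A :: "'a::comm_semiring_1^'m^'n"
  shows "A *v axis j c = c *s column j A"
  by (simp add: vec_eq_iff matrix_vector_mult_def axis_def column_def if_distrib mult.commute
      cong: if_cong)

definition nonzero_vecs :: "complex set \<Rightarrow> (complex^'m) set" where
  "nonzero_vecs F = {x. x \<noteq> 0 \<and> (\<forall>i. x$i \<in> F)}"

lemma opnorm_eq_SUP: "opnorm F p q A = (SUP x\<in>nonzero_vecs F. lpnorm q (A *v x) / lpnorm p x)"
  by (simp add: opnorm_def nonzero_vecs_def)

lemma axis_in_nonzero_vecs: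
  assumes "0 \<in> F" "1 \<in> F"
  shows "axis j 1 \<in> nonzero_vecs F"
  using assms by (auto simp: nonzero_vecs_def axis_def vec_eq_iff)

lemma axis_add_axis_in_nonzero_vecs:
  assumes "0 \<in> F" "1 \<in> F" "c \<in> F" "j \<noteq> k"
  shows "axis j 1 + axis k c \<in> nonzero_vecs F"
proof -
  have "(axis j 1 + axis k c) $ j = 1"
    using assms(4) by (simp add: axis_def)
  then have "axis j 1 + axis k c \<noteq> 0"
    by (metis one_neq_zero zero_index)
  then show ?thesis
    using assms by (auto simp: nonzero_vecs_def axis_def)
qed

lemma bdd_above_opnorm_quotients:
  fixes A :: "complex^'m^'n"
  assumes p: "1 \<le> p" and q: "1 \<le> q"
  shows "bdd_above ((\<lambda>x. lpnorm q (A *v x) / lpnorm p x) ` nonzero_vecs F)"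
proof (rule bdd_aboveI2)
  fix x :: "complex^'m"
  assume "x \<in> nonzero_vecs F"
  then have "0 < lpnorm p x"
    using p by (simp add: nonzero_vecs_def lpnorm_pos)
  have "lpnorm q (A *v x) \<le> lpnorm 1 (A *v x)"
    using q lpnorm_antimono[of 1 q] by (simp add: one_ereal_def)
  also have "\<dots> \<le> (\<Sum>j\<in>UNIV. norm (x$j) * colnorm1 A j)"
    by (rule lpnorm_1_mult_le)
  also have "\<dots> \<le> (\<Sum>j\<in>(UNIV::'m set). lpnorm p x * maxcol1 A)"
    using norm_nth_le_lpnorm[OF p, of x] colnorm1_le_maxcol1[of A] lpnorm_nonneg[OF p, of x]
    by (intro sum_mono mult_mono) (auto simp: colnorm1_def sum_nonneg)
  finally show "lpnorm q (A *v x) / lpnorm p x \<le> CARD('m) * maxcol1 A"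
    using \<open>0 < lpnorm p x\<close> by (simp add: pos_divide_le_eq mult_ac)
qed

lemma lpnorm_mult_le_opnorm:
  fixes A :: "complex^'m^'n"
  assumes "1 \<le> p" "1 \<le> q" "x \<in> nonzero_vecs F"
  shows "lpnorm q (A *v x) \<le> opnorm F p q A * lpnorm p x"
proof -
  have "lpnorm q (A *v x) / lpnorm p x \<le> opnorm F p q A"
    unfolding opnorm_eq_SUP using assms by (intro cSUP_upper bdd_above_opnorm_quotients)
  moreover have "0 < lpnorm p x"
    using assms by (simp add: nonzero_vecs_def lpnorm_pos)
  ultimately show ?thesis
    by (simp add: pos_divide_le_eq)
qed

lemma opnorm_le:
  fixes A :: "complex^'m^'n"
  assumes "0 \<in> F" "1 \<in> F" "1 \<le> p"
    and bound: "\<And>x. x \<in> nonzero_vecs F \<Longrightarrow> lpnorm q (A *v x) \<le> C * lpnorm p x"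
  shows "opnorm F p q A \<le> C"
  unfolding opnorm_eq_SUP
proof (rule cSUP_least)
  show "nonzero_vecs F \<noteq> {}"
    using axis_in_nonzero_vecs[OF assms(1,2)] by blast
  fix x :: "complex^'m"
  assume "x \<in> nonzero_vecs F"
  moreover have "0 < lpnorm p x"
    using assms calculation by (simp add: nonzero_vecs_def lpnorm_pos)
  ultimately show "lpnorm q (A *v x) / lpnorm p x \<le> C"
    using bound by (simp add: pos_divide_le_eq)
qed

lemma lpnorm_column_le_opnorm:
  fixes A :: "complex^'m^'n"
  assumes "0 \<in> F" "1 \<in> F" "1 \<le> p" "1 \<le> q"
  shows "lpnorm q (column j A) \<le> opnorm F p q A"
  using lpnorm_mult_le_opnorm[of p q "axis j 1" F A] axis_in_nonzero_vecs[of F j]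
    lpnorm_axis_1[of p j] assms
  by (simp add: matrix_vector_mult_axis)

lemma opnorm_nonneg:
  fixes A :: "complex^'m^'n"
  assumes "0 \<in> F" "1 \<in> F" "1 \<le> p" "1 \<le> q"
  shows "0 \<le> opnorm F p q A"
  using lpnorm_column_le_opnorm[OF assms] lpnorm_nonneg[OF assms(4)] order_trans by blast

lemma opnorm_1_1:
  fixes A :: "complex^'m^'n"
  assumes "0 \<in> F" "1 \<in> F"
  shows "opnorm F 1 1 A = maxcol1 A"
proof (rule antisym)
  show "opnorm F 1 1 A \<le> maxcol1 A"
  proof (rule opnorm_le[OF assms])
    fix x :: "complex^'m"
    have "lpnorm 1 (A *v x) \<le> (\<Sum>j\<in>UNIV. norm (x$j) * colnorm1 A j)"
      by (rule lpnorm_1_mult_le)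
    also have "\<dots> \<le> (\<Sum>j\<in>UNIV. norm (x$j) * maxcol1 A)"
      by (intro sum_mono mult_left_mono colnorm1_le_maxcol1) auto
    also have "\<dots> = maxcol1 A * lpnorm 1 x"
      by (simp add: lpnorm_1 sum_distrib_left mult.commute)
    finally show "lpnorm 1 (A *v x) \<le> maxcol1 A * lpnorm 1 x" .
  qed simp
  obtain j where "colnorm1 A j = maxcol1 A"
    using ex_colnorm1_eq_maxcol1 by blast
  then show "maxcol1 A \<le> opnorm F 1 1 A"
    using lpnorm_column_le_opnorm[OF assms, of 1 1 j A] by (simp add: lpnorm_1_column)
qed


section \<open>The class E11\<close>

lemma maxcol1_eq_if_E11:
  fixes A :: "complex^'m^'n"
  assumes "E11 F p q A" "0 \<in> F" "1 \<in> F" "1 < p" "1 < q"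
  shows "maxcol1 A = CARD('n) powr (1 - inv_exp q) * opnorm F p q A"
  using assms opnorm_1_1[of F A] unfolding E11_def
  by (metis div_by_1 one_ereal_def order_refl)

lemma opnorm_eq_if_E11:
  fixes A :: "complex^'m^'n"
  assumes E: "E11 F p q A" and F: "0 \<in> F" "1 \<in> F" and "1 < p" "1 < q"
    and r: "1 \<le> r" "ereal r < p" and s: "1 \<le> s" "ereal s < q"
  shows "opnorm F (ereal r) (ereal s) A = CARD('n) powr (1 / s) * (maxcol1 A / CARD('n))"
proof -
  have "opnorm F (ereal r) (ereal s) A = CARD('n) powr (1 / s - inv_exp q) * opnorm F p q A"
    using E r s unfolding E11_def by blast
  also have "\<dots> = CARD('n) powr (1 / s) / CARD('n) * (CARD('n) powr (1 - inv_exp q) * opnorm F p q A)"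
    by (simp add: powr_diff)
  finally show ?thesis
    using maxcol1_eq_if_E11[OF assms(1-5)] by simp
qed

lemma E11_if_column_const_norm:
  fixes A :: "complex^'m^'n"
  assumes F: "0 \<in> F" "1 \<in> F" and p: "1 \<le> p" and q: "1 \<le> q"
    and col: "\<And>i. norm (A$i$j) = CARD('n) powr (- inv_exp q) * opnorm F p q A"
  shows "E11 F p q A"
  unfolding E11_def
proof (intro allI impI)
  fix r s :: real
  assume rs: "1 \<le> r \<and> ereal r < p \<and> 1 \<le> s \<and> ereal s < q"
  define P where "P = opnorm F p q A"
  define n where "n = real CARD('n)"
  have "0 \<le> P"
    unfolding P_def using F p q by (rule opnorm_nonneg)
  show "opnorm F (ereal r) (ereal s) A = CARD('n) powr (1 / s - inv_exp q) * opnorm F p q A"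
  proof (rule antisym)
    show "opnorm F (ereal r) (ereal s) A \<le> CARD('n) powr (1 / s - inv_exp q) * opnorm F p q A"
    proof (rule opnorm_le[OF F])
      fix x :: "complex^'m"
      assume x: "x \<in> nonzero_vecs F"
      have "lpnorm (ereal s) (A *v x) \<le> n powr (1 / s - inv_exp q) * lpnorm q (A *v x)"
        unfolding n_def using rs by (intro lpnorm_le_card_powr_lpnorm) auto
      also have "\<dots> \<le> n powr (1 / s - inv_exp q) * (P * lpnorm p x)"
        unfolding P_def using lpnorm_mult_le_opnorm[OF p q x] by (intro mult_left_mono) auto
      also have "\<dots> \<le> n powr (1 / s - inv_exp q) * (P * lpnorm (ereal r) x)"
        using lpnorm_antimono[of r p x] rs \<open>0 \<le> P\<close> by (intro mult_left_mono) auto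
      finally show "lpnorm (ereal s) (A *v x)
          \<le> CARD('n) powr (1 / s - inv_exp q) * opnorm F p q A * lpnorm (ereal r) x"
        unfolding n_def P_def by (simp add: mult.assoc)
    qed (use rs in auto)
    have "lpnorm (ereal s) (column j A) = n powr (1 / s) * (n powr (- inv_exp q) * P)"
      unfolding n_def P_def using rs col by (subst lpnorm_const_norm) (auto simp: column_def inv_exp_def)
    also have "\<dots> = n powr (1 / s - inv_exp q) * P"
      by (simp add: powr_diff powr_minus field_simps)
    finally show "CARD('n) powr (1 / s - inv_exp q) * opnorm F p q A \<le> opnorm F (ereal r) (ereal s) A"
      using lpnorm_column_le_opnorm[OF F, of "ereal r" "ereal s" j A] rs
      unfolding n_def P_def by (simp add: one_ereal_def)
  qed
qed

lemma opnorm_single_column: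
  fixes A :: "complex^'m^'n"
  assumes F: "0 \<in> F" "1 \<in> F" and p: "1 \<le> p" and q: "1 \<le> q"
    and zero: "\<And>k i. k \<noteq> j \<Longrightarrow> A$i$k = 0" and col: "\<And>i. norm (A$i$j) = c"
  shows "opnorm F p q A = CARD('n) powr inv_exp q * c"
proof (rule antisym)
  have "A *v x = x$j *s column j A" for x
  proof -
    have "(A *v x) $ i = (\<Sum>l\<in>UNIV. if l = j then x$j * A$i$j else 0)" for i
      unfolding matrix_vector_mult_def vec_lambda_beta by (intro sum.cong refl) (simp add: zero)
    then show ?thesis
      by (simp add: vec_eq_iff column_def)
  qed
  show "opnorm F p q A \<le> CARD('n) powr inv_exp q * c"
  proof (rule opnorm_le[OF F p])
    fix x :: "complex^'m"
    have "lpnorm q (A *v x) = CARD('n) powr inv_exp q * (norm (x$j) * c)"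
      using q col \<open>A *v x = x$j *s column j A\<close>
      by (intro lpnorm_const_norm) (auto simp: norm_mult column_def)
    also have "\<dots> \<le> CARD('n) powr inv_exp q * (lpnorm p x * c)"
      using norm_nth_le_lpnorm[OF p, of x j] col[of undefined]
      by (intro mult_left_mono mult_right_mono) auto
    finally show "lpnorm q (A *v x) \<le> CARD('n) powr inv_exp q * c * lpnorm p x"
      by (simp add: mult_ac)
  qed
  show "CARD('n) powr inv_exp q * c \<le> opnorm F p q A"
    using lpnorm_column_le_opnorm[OF F p q, of j A] lpnorm_const_norm[OF q, of "column j A" c] col
    by (simp add: column_def)
qed

lemma E11_if_single_column_const_norm:
  fixes A :: "complex^'m^'n"
  assumes F: "0 \<in> F" "1 \<in> F" and p: "1 \<le> p" and q: "1 \<le> q"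
    and zero: "\<And>k i. k \<noteq> j \<Longrightarrow> A$i$k = 0" and col: "\<And>i. norm (A$i$j) = c"
  shows "E11 F p q A"
proof (rule E11_if_column_const_norm[OF F p q])
  fix i
  show "norm (A$i$j) = CARD('n) powr (- inv_exp q) * opnorm F p q A"
    using col opnorm_single_column[OF assms] by (simp add: powr_minus)
qed


lemma max_column_const_norm_if_E11:
  fixes A :: "complex^'m^'n"
  assumes E: "E11 F p q A" and F: "0 \<in> F" "1 \<in> F" and p: "1 < p" and q: "1 < q"
    and j: "colnorm1 A j = maxcol1 A"
  shows "norm (A$i$j) = maxcol1 A / CARD('n)"
proof -
  define n where "n = real CARD('n)"
  define \<sigma> where "\<sigma> = maxcol1 A"
  define K where "K = \<sigma> / n"
  define v where "v l = norm (A$l$j)" for l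
  have v_le: "0 \<le> v l \<and> v l \<le> \<sigma>" for l
    using j member_le_sum[of l UNIV "\<lambda>l. v l"]
    unfolding v_def \<sigma>_def colnorm1_def by auto
  have sum_v: "(\<Sum>l\<in>UNIV. v l) = n * K"
    using j unfolding v_def K_def n_def \<sigma>_def colnorm1_def by simp
  show ?thesis
  proof (cases "\<sigma> = 0")
    case True
    then show ?thesis
      using v_le[of i] unfolding v_def \<sigma>_def by simp
  next
    case False
    then have "0 < K" "K \<le> \<sigma>"
      using v_le[of i] unfolding K_def n_def by (auto simp: field_simps)
    obtain s where s: "1 < ereal s" "ereal s < min q 2"
      using ereal_dense2[of 1 "min q 2"] q by auto
    then have s': "1 < s" "s \<le> 2" "ereal s < q"
      by auto
    have "lpnorm (ereal s) (column j A) \<le> n powr (1 / s) * K"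
      using lpnorm_column_le_opnorm[OF F, of 1 "ereal s" j A] s' p opnorm_eq_if_E11[OF E F p q, of 1 s]
      by (simp add: one_ereal_def K_def \<sigma>_def n_def)
    then have "lpnorm (ereal s) (column j A) powr s \<le> (n powr (1 / s) * K) powr s"
      using lpnorm_nonneg[of "ereal s" "column j A"] s' by (intro powr_mono2) auto
    then have "(\<Sum>l\<in>UNIV. v l powr s) \<le> (n powr (1 / s) * K) powr s"
      using lpnorm_powr[of s "column j A"] s' unfolding v_def by (simp add: column_def)
    also have "\<dots> = n * K powr s"
      using \<open>0 < K\<close> s' by (simp add: n_def powr_mult powr_powr)
    finally have "(\<Sum>l\<in>UNIV. v l powr s) \<le> CARD('n) * K powr s"
      unfolding n_def .
    from eq_mean_if_sum_powr_le[of s K \<sigma> v, OF s'(1,2) \<open>0 < K\<close> \<open>K \<le> \<sigma>\<close> v_le sum_v[unfolded n_def] this]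
    show ?thesis
      unfolding v_def K_def \<sigma>_def n_def .
  qed
qed

section \<open>Perturbing a maximal column\<close>

lemma real_or_complex_closed:
  assumes "F = \<real> \<or> F = UNIV"
  shows "0 \<in> F" "1 \<in> F" "x \<in> F \<Longrightarrow> of_real t * x \<in> F" "x \<in> F \<Longrightarrow> cnj x \<in> F"
    "x \<in> F \<Longrightarrow> y \<in> F \<Longrightarrow> x * y \<in> F" "(\<And>i. f i \<in> F) \<Longrightarrow> sum f S \<in> F"
  using assms by (auto simp: Reals_cnj_iff)

lemma norm_perturbed_column_entry_ge:
  fixes A :: "complex^'m^'n"
  assumes "j \<noteq> k" "norm (A$i$j) = K" "0 < K"
  shows "K + Re (\<tau> * (A$i$k * cnj (A$i$j))) / K \<le> norm ((A *v (axis j 1 + axis k \<tau>)) $ i)"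
proof -
  define w where "w = (A *v (axis j 1 + axis k \<tau>)) $ i"
  have "w = A$i$j + \<tau> * A$i$k"
    unfolding w_def by (simp add: matrix_vector_right_distrib matrix_vector_mult_axis column_def)
  then have "Re (w * cnj (A$i$j)) = K\<^sup>2 + Re (\<tau> * (A$i$k * cnj (A$i$j)))"
    using assms(2) by (simp add: algebra_simps flip: complex_norm_square)
  moreover have "Re (w * cnj (A$i$j)) \<le> norm w * K"
    using complex_Re_le_cmod[of "w * cnj (A$i$j)"] assms(2) by (simp add: norm_mult)
  ultimately show ?thesis
    using \<open>0 < K\<close> unfolding w_def[symmetric] by (simp add: field_simps power2_eq_square)
qed

lemma perturbed_column_first_order_le:
  fixes A :: "complex^'m^'n" and K r :: real
  assumes "j \<noteq> k" and K: "0 < K" "\<And>i. norm (A$i$j) = K" and r: "1 \<le> r"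
    and opn: "opnorm F (ereal r) 1 A = CARD('n) * K"
    and x: "axis j 1 + axis k \<tau> \<in> nonzero_vecs F"
  shows "(\<Sum>i\<in>UNIV. Re (\<tau> * (A$i$k * cnj (A$i$j)))) / K \<le> CARD('n) * K * norm \<tau> powr r"
proof -
  define c where "c i = Re (\<tau> * (A$i$k * cnj (A$i$j)))" for i
  have "CARD('n) * K + (\<Sum>i\<in>UNIV. c i) / K = (\<Sum>i\<in>UNIV. K + c i / K)"
    by (simp add: sum.distrib sum_divide_distrib)
  also have "\<dots> \<le> lpnorm 1 (A *v (axis j 1 + axis k \<tau>))"
    unfolding c_def lpnorm_1 using \<open>j \<noteq> k\<close> K by (intro sum_mono norm_perturbed_column_entry_ge) auto
  also have "\<dots> \<le> CARD('n) * K * lpnorm (ereal r) (axis j 1 + axis k \<tau>)"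
    using lpnorm_mult_le_opnorm[OF _ _ x, of "ereal r" 1 A] r opn by simp
  also have "\<dots> \<le> CARD('n) * K * (1 + norm \<tau> powr r)"
    using lpnorm_axis_add_axis_powr_le[of r 1 j k \<tau>] lpnorm_nonneg[of "ereal r"] r \<open>j \<noteq> k\<close> K
    by (intro mult_left_mono) auto
  finally show ?thesis
    unfolding c_def by (simp add: algebra_simps)
qed

lemma perturbation_sum_nonpos:
  fixes A :: "complex^'m^'n" and K r :: real
  assumes "j \<noteq> k" and K: "0 < K" "\<And>i. norm (A$i$j) = K" and "1 < r"
    and opn: "opnorm F (ereal r) 1 A = CARD('n) * K"
    and x: "\<And>t. axis j 1 + axis k (of_real t * u) \<in> nonzero_vecs F"
  shows "(\<Sum>i\<in>UNIV. Re (u * (A$i$k * cnj (A$i$j)))) \<le> 0"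
proof -
  define S where "S = (\<Sum>i\<in>UNIV. Re (u * (A$i$k * cnj (A$i$j))))"
  define C where "C = CARD('n) * K * norm u powr r"
  have "S / K \<le> C * t powr (r - 1)" if "0 < t" for t
  proof -
    have Re_scale: "Re (of_real t * u * w) = t * Re (u * w)" for w
      by (simp add: mult.assoc)
    have "(\<Sum>i\<in>UNIV. Re (of_real t * u * (A$i$k * cnj (A$i$j)))) = t * S"
      unfolding S_def sum_distrib_left by (simp only: Re_scale)
    with perturbed_column_first_order_le[OF \<open>j \<noteq> k\<close> K _ opn x[of t]]
    have "t * (S / K) \<le> t * (C * t powr (r - 1))"
      using \<open>1 < r\<close> \<open>0 < t\<close> unfolding C_def by (simp add: norm_mult powr_mult powr_diff field_simps)
    then show ?thesis
      using \<open>0 < t\<close> by (metis mult_le_cancel_left_pos)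
  qed
  then have "S / K \<le> 0"
    using \<open>1 < r\<close> by (intro nonpos_if_le_powr_near_0[where C = C and \<alpha> = "r - 1" and \<delta> = 1]) auto
  then show ?thesis
    unfolding S_def using K by (simp add: divide_le_0_iff)
qed

lemma column_orthogonal_max_column_if_E11:
  fixes A :: "complex^'m^'n"
  assumes F: "F = \<real> \<or> F = UNIV" and A_F: "\<forall>i j. A$i$j \<in> F"
    and E: "E11 F p q A" and p: "1 < p" and q: "1 < q"
    and j: "colnorm1 A j = maxcol1 A" and "k \<noteq> j"
  shows "(\<Sum>i\<in>UNIV. A$i$k * cnj (A$i$j)) = 0"
proof -
  note F' = real_or_complex_closed[OF F]
  define K where "K = maxcol1 A / CARD('n)"
  define z where "z = (\<Sum>i\<in>UNIV. A$i$k * cnj (A$i$j))"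
  have col: "norm (A$i$j) = K" for i
    using max_column_const_norm_if_E11[OF E F'(1,2) p q j] unfolding K_def .
  show ?thesis
  proof (cases "K = 0")
    case True
    then show ?thesis
      using col by simp
  next
    case False
    then have "0 < K"
      using col norm_ge_zero by (metis less_eq_real_def)
    obtain r where r: "1 < r" "ereal r < p"
      using ereal_dense2[OF p] by (auto simp: one_ereal_def)
    have opn: "opnorm F (ereal r) 1 A = CARD('n) * K"
      using opnorm_eq_if_E11[OF E F'(1,2) p q, of r 1] r q unfolding K_def
      by (simp add: one_ereal_def)
    have "cnj z \<in> F"
      unfolding z_def using A_F by (intro F'(4-6)) auto
    then have x: "axis j 1 + axis k (of_real t * cnj z) \<in> nonzero_vecs F" for t
      using \<open>k \<noteq> j\<close> by (intro axis_add_axis_in_nonzero_vecs F'(1-3)) auto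
    have "norm z ^ 2 = Re (cnj z * z)"
      by (simp add: mult.commute[of "cnj z"] flip: complex_norm_square)
    also have "\<dots> = (\<Sum>i\<in>UNIV. Re (cnj z * (A$i$k * cnj (A$i$j))))"
      unfolding z_def Re_sum[symmetric] sum_distrib_left ..
    also have "\<dots> \<le> 0"
      using perturbation_sum_nonpos[OF \<open>k \<noteq> j\<close>[symmetric] \<open>0 < K\<close> col r(1) opn x] .
    finally show ?thesis
      unfolding z_def by simp
  qed
qed

lemma sum_norm_powr_le_opnorm:
  fixes A :: "complex^'m^'n"
  assumes "1 \<le> r" "1 \<le> s" "x \<in> nonzero_vecs F"
  shows "(\<Sum>i\<in>UNIV. norm ((A *v x) $ i) powr s) \<le> (opnorm F (ereal r) (ereal s) A * lpnorm (ereal r) x) powr s"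
proof -
  have "(\<Sum>i\<in>UNIV. norm ((A *v x) $ i) powr s) = lpnorm (ereal s) (A *v x) powr s"
    using assms by (simp add: lpnorm_powr)
  also have "\<dots> \<le> (opnorm F (ereal r) (ereal s) A * lpnorm (ereal r) x) powr s"
    using assms lpnorm_mult_le_opnorm[of "ereal r" "ereal s" x F A] lpnorm_nonneg[of "ereal s"]
    by (intro powr_mono2) auto
  finally show ?thesis .
qed

lemma sum_norm_powr_perturbed_column_ge:
  fixes A :: "complex^'m^'n"
  assumes s: "1 < s" "s \<le> 2" and "j \<noteq> k" and K: "0 < K" "\<And>i. norm (A$i$j) = K"
    and small: "\<And>i. \<bar>Re (\<tau> * (A$i$k * cnj (A$i$j)))\<bar> \<le> K\<^sup>2"
    and balanced: "(\<Sum>i\<in>UNIV. Re (\<tau> * (A$i$k * cnj (A$i$j)))) = 0"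
  shows "CARD('n) * K powr s
      + (s - 1) * (2 * K) powr (s - 2) / 2 * (\<Sum>i\<in>UNIV. (Re (\<tau> * (A$i$k * cnj (A$i$j))) / K)\<^sup>2)
    \<le> (\<Sum>i\<in>UNIV. norm ((A *v (axis j 1 + axis k \<tau>)) $ i) powr s)"
proof -
  define c where "c i = Re (\<tau> * (A$i$k * cnj (A$i$j)))" for i
  define v where "v i = K + c i / K" for i
  have c_small: "\<bar>c i / K\<bar> \<le> K" for i
    using small[of i] K unfolding c_def[symmetric]
    by (simp add: pos_divide_le_eq power2_eq_square)
  have v_bounds: "0 \<le> v i \<and> v i \<le> 2 * K" for i
    using c_small[of i] unfolding v_def abs_le_iff by linarith
  have "(\<Sum>i\<in>UNIV. v i) = CARD('n) * K"
    unfolding v_def sum.distrib using balanced by (simp add: c_def flip: sum_divide_distrib)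
  then have "CARD('n) * K powr s + (s - 1) * (2 * K) powr (s - 2) / 2 * (\<Sum>i\<in>UNIV. (v i - K)\<^sup>2)
      \<le> (\<Sum>i\<in>UNIV. v i powr s)"
    using K s v_bounds by (intro sum_powr_ge_quadratic) auto
  also have "\<dots> \<le> (\<Sum>i\<in>UNIV. norm ((A *v (axis j 1 + axis k \<tau>)) $ i) powr s)"
    unfolding v_def c_def using \<open>j \<noteq> k\<close> K s v_bounds[unfolded v_def c_def]
    by (intro sum_mono powr_mono2 norm_perturbed_column_entry_ge) auto
  finally show ?thesis
    unfolding v_def c_def by simp
qed

lemma perturbed_column_second_order_le:
  fixes A :: "complex^'m^'n" and K r s :: real
  assumes "j \<noteq> k" and K: "0 < K" "\<And>i. norm (A$i$j) = K" and s: "1 < s" "s \<le> 2" "s \<le> r"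
    and opn: "opnorm F (ereal r) (ereal s) A = CARD('n) powr (1 / s) * K"
    and x: "axis j 1 + axis k \<tau> \<in> nonzero_vecs F"
    and small: "\<And>i. \<bar>Re (\<tau> * (A$i$k * cnj (A$i$j)))\<bar> \<le> K\<^sup>2"
    and balanced: "(\<Sum>i\<in>UNIV. Re (\<tau> * (A$i$k * cnj (A$i$j)))) = 0"
  shows "(s - 1) * (2 * K) powr (s - 2) / 2 * (\<Sum>i\<in>UNIV. (Re (\<tau> * (A$i$k * cnj (A$i$j))) / K)\<^sup>2)
    \<le> CARD('n) * K powr s * norm \<tau> powr r"
proof -
  have "CARD('n) * K powr s
      + (s - 1) * (2 * K) powr (s - 2) / 2 * (\<Sum>i\<in>UNIV. (Re (\<tau> * (A$i$k * cnj (A$i$j))) / K)\<^sup>2)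
    \<le> (\<Sum>i\<in>UNIV. norm ((A *v (axis j 1 + axis k \<tau>)) $ i) powr s)"
    by (rule sum_norm_powr_perturbed_column_ge[OF s(1,2) \<open>j \<noteq> k\<close> K small balanced])
  also have "\<dots> \<le> (CARD('n) powr (1 / s) * K * lpnorm (ereal r) (axis j 1 + axis k \<tau>)) powr s"
    using sum_norm_powr_le_opnorm[OF _ _ x, of r s A] s opn by simp
  also have "\<dots> = CARD('n) * K powr s * lpnorm (ereal r) (axis j 1 + axis k \<tau>) powr s"
    using s K lpnorm_nonneg[of "ereal r"] by (simp add: powr_mult powr_powr)
  also have "\<dots> \<le> CARD('n) * K powr s * (1 + norm \<tau> powr r)"
    using lpnorm_axis_add_axis_powr_le[of r s j k \<tau>] s \<open>j \<noteq> k\<close> by (intro mult_left_mono) auto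
  finally show ?thesis
    by (simp add: algebra_simps)
qed

lemma perturbation_terms_zero_if_balanced:
  fixes A :: "complex^'m^'n" and K r s :: real
  assumes "j \<noteq> k" and K: "0 < K" "\<And>i. norm (A$i$j) = K" and s: "1 < s" "s \<le> 2" and "2 < r"
    and opn: "opnorm F (ereal r) (ereal s) A = CARD('n) powr (1 / s) * K"
    and x: "\<And>t. axis j 1 + axis k (of_real t * u) \<in> nonzero_vecs F"
    and balanced: "(\<Sum>i\<in>UNIV. Re (u * (A$i$k * cnj (A$i$j)))) = 0"
  shows "Re (u * (A$i\<^sub>0$k * cnj (A$i\<^sub>0$j))) = 0"
proof -
  define \<beta> where "\<beta> i = Re (u * (A$i$k * cnj (A$i$j)))" for i
  define B where "B = (\<Sum>i\<in>UNIV. \<bar>\<beta> i\<bar>)"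
  define \<kappa> where "\<kappa> = (s - 1) * (2 * K) powr (s - 2) / 2"
  define C where "C = CARD('n) * K powr s * norm u powr r"
  have "0 < \<kappa>" "0 \<le> B"
    unfolding \<kappa>_def B_def using s K by (auto simp: sum_nonneg)
  have "t\<^sup>2 * (\<kappa> * (\<beta> i\<^sub>0 / K)\<^sup>2) \<le> t\<^sup>2 * (C * t powr (r - 2))"
    if t: "0 < t" "t < K\<^sup>2 / (B + 1)" for t
  proof -
    have Re_eq: "Re (of_real t * u * (A$i$k * cnj (A$i$j))) = t * \<beta> i" for i
      unfolding \<beta>_def by (simp add: mult.assoc)
    have "\<bar>t * \<beta> i\<bar> \<le> t * (B + 1)" for i
      using t member_le_sum[of i UNIV "\<lambda>i. \<bar>\<beta> i\<bar>"] unfolding B_def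
      by (simp add: abs_mult mult_left_mono)
    also have "t * (B + 1) \<le> K\<^sup>2"
      using t \<open>0 \<le> B\<close> by (simp add: pos_less_divide_eq less_imp_le)
    finally have small: "\<bar>t * \<beta> i\<bar> \<le> K\<^sup>2" for i .
    have "(\<Sum>i\<in>UNIV. t * \<beta> i) = 0"
      using balanced unfolding \<beta>_def by (simp flip: sum_distrib_left)
    with perturbed_column_second_order_le[OF \<open>j \<noteq> k\<close> K s _ opn x[of t]]
    have second_order: "\<kappa> * (\<Sum>i\<in>UNIV. (t * \<beta> i / K)\<^sup>2) \<le> CARD('n) * K powr s * (t * norm u) powr r"
      using \<open>2 < r\<close> s small t unfolding Re_eq \<kappa>_def by (simp add: norm_mult)
    have "t\<^sup>2 * (\<kappa> * (\<beta> i\<^sub>0 / K)\<^sup>2) = \<kappa> * (t * \<beta> i\<^sub>0 / K)\<^sup>2"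
      by (simp add: power2_eq_square)
    also have "\<dots> \<le> \<kappa> * (\<Sum>i\<in>UNIV. (t * \<beta> i / K)\<^sup>2)"
      using \<open>0 < \<kappa>\<close> by (intro mult_left_mono member_le_sum) auto
    also have "\<dots> \<le> CARD('n) * K powr s * (t * norm u) powr r"
      by (rule second_order)
    also have "\<dots> = t\<^sup>2 * (C * t powr (r - 2))"
      unfolding C_def using t by (simp add: powr_mult powr_diff powr_realpow)
    finally show ?thesis .
  qed
  then have "\<kappa> * (\<beta> i\<^sub>0 / K)\<^sup>2 \<le> 0"
    using \<open>2 < r\<close> K \<open>0 \<le> B\<close>
    by (intro nonpos_if_le_powr_near_0[where C = C and \<alpha> = "r - 2" and \<delta> = "K\<^sup>2 / (B + 1)"]) auto
  then show ?thesis
    using \<open>0 < \<kappa>\<close> K unfolding \<beta>_def by (simp add: mult_le_0_iff)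
qed

lemma other_columns_zero_if_E11:
  fixes A :: "complex^'m^'n"
  assumes F: "F = \<real> \<or> F = UNIV" and A_F: "\<forall>i j. A$i$j \<in> F"
    and E: "E11 F p q A" and p: "2 < p" and q: "1 < q"
    and j: "colnorm1 A j = maxcol1 A" and "0 < maxcol1 A" and "k \<noteq> j"
  shows "A$i\<^sub>0$k = 0"
proof -
  note F' = real_or_complex_closed[OF F]
  have "1 < p"
    using order.strict_trans[OF _ p, of 1] by simp
  define K where "K = maxcol1 A / CARD('n)"
  define b where "b i = A$i$k * cnj (A$i$j)" for i
  have "0 < K"
    unfolding K_def using \<open>0 < maxcol1 A\<close> by simp
  have col: "norm (A$i$j) = K" for i
    using max_column_const_norm_if_E11[OF E F'(1,2) \<open>1 < p\<close> q j] unfolding K_def .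
  obtain r where r: "2 < r" "ereal r < p"
    using ereal_dense2[OF p] by auto
  obtain s where s: "1 < ereal s" "ereal s < min q 2"
    using ereal_dense2[of 1 "min q 2"] q by auto
  then have s': "1 < s" "s \<le> 2" "ereal s < q"
    by auto
  have opn: "opnorm F (ereal r) (ereal s) A = CARD('n) powr (1 / s) * K"
    using opnorm_eq_if_E11[OF E F'(1,2) \<open>1 < p\<close> q, of r s] r s' unfolding K_def by simp
  have "cnj (b i\<^sub>0) \<in> F"
    unfolding b_def using A_F by (intro F'(4,5)) auto
  then have x: "axis j 1 + axis k (of_real t * cnj (b i\<^sub>0)) \<in> nonzero_vecs F" for t
    using \<open>k \<noteq> j\<close> by (intro axis_add_axis_in_nonzero_vecs F'(1-3)) auto
  have "(\<Sum>i\<in>UNIV. Re (cnj (b i\<^sub>0) * b i)) = Re (cnj (b i\<^sub>0) * (\<Sum>i\<in>UNIV. b i))"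
    unfolding sum_distrib_left Re_sum ..
  also have "(\<Sum>i\<in>UNIV. b i) = 0"
    using column_orthogonal_max_column_if_E11[OF F A_F E \<open>1 < p\<close> q j \<open>k \<noteq> j\<close>]
    unfolding b_def .
  finally have balanced: "(\<Sum>i\<in>UNIV. Re (cnj (b i\<^sub>0) * b i)) = 0"
    by simp
  from perturbation_terms_zero_if_balanced[OF \<open>k \<noteq> j\<close>[symmetric] \<open>0 < K\<close> col s'(1,2) r(1) opn
      x[unfolded b_def] balanced[unfolded b_def]]
  have "Re (cnj (b i\<^sub>0) * b i\<^sub>0) = 0"
    unfolding b_def .
  then have "b i\<^sub>0 = 0"
    by (simp add: mult.commute flip: complex_norm_square)
  then show ?thesis
    unfolding b_def using col[of i\<^sub>0] \<open>0 < K\<close> by auto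
qed

lemma single_nonzero_column_if_E11:
  fixes A :: "complex^'m^'n"
  assumes F: "F = \<real> \<or> F = UNIV" and A_F: "\<forall>i j. A$i$j \<in> F"
    and E: "E11 F p q A" and p: "2 < p" and q: "1 < q" and "A \<noteq> 0"
  shows "\<exists>j. (\<forall>k. k \<noteq> j \<longrightarrow> (\<forall>i. A$i$k = 0)) \<and> (\<exists>c. \<forall>i. norm (A$i$j) = c)"
proof -
  obtain j where j: "colnorm1 A j = maxcol1 A"
    using ex_colnorm1_eq_maxcol1 by blast
  have "1 < p"
    using order.strict_trans[OF _ p, of 1] by simp
  show ?thesis
    using other_columns_zero_if_E11[OF F A_F E p q j maxcol1_pos[OF \<open>A \<noteq> 0\<close>]]
      max_column_const_norm_if_E11[OF E real_or_complex_closed(1,2)[OF F] \<open>1 < p\<close> q j]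
    by blast
qed

theorem theorem4:
  fixes F :: "complex set" and A :: "complex^'m^'n" and p q :: ereal
  assumes F: "F = \<real> \<or> F = UNIV"
    and A_F: "\<forall>i j. A$i$j \<in> F"
    and p: "p > 1" and q: "q > 1"
  shows
   "(E11 F p q A \<longrightarrow>
       (\<forall>j. colnorm1 A j = maxcol1 A \<longrightarrow>
            (\<forall>i. norm (A$i$j) = maxcol1 A / real CARD('n))) \<and>
       (\<forall>j. colnorm1 A j = maxcol1 A \<longrightarrow>
            (\<forall>k. k \<noteq> j \<longrightarrow> (\<Sum>i\<in>UNIV. A$i$k * cnj (A$i$j)) = 0)) \<and>
       maxcol1 A = real CARD('n) powr (1 - inv_exp q) * opnorm F p q A)
    \<and> ((\<exists>j. \<forall>i. norm (A$i$j) = real CARD('n) powr (- inv_exp q) * opnorm F p q A)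
         \<longrightarrow> E11 F p q A)
    \<and> (p > 2 \<and> A \<noteq> 0 \<longrightarrow>
         (E11 F p q A \<longleftrightarrow>
           (\<exists>j. (\<forall>k. k \<noteq> j \<longrightarrow> (\<forall>i. A$i$k = 0)) \<and>
                (\<exists>c. \<forall>i. norm (A$i$j) = c))))"
proof (intro conjI impI allI)
  note F' = real_or_complex_closed(1,2)[OF F]
  have "1 \<le> p" "1 \<le> q"
    using p q by auto
  show "norm (A$i$j) = maxcol1 A / CARD('n)"
    if "E11 F p q A" "colnorm1 A j = maxcol1 A" for i j
    using max_column_const_norm_if_E11[OF that(1) F' p q that(2)] .
  show "(\<Sum>i\<in>UNIV. A$i$k * cnj (A$i$j)) = 0"
    if "E11 F p q A" "colnorm1 A j = maxcol1 A" "k \<noteq> j" for j k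
    using column_orthogonal_max_column_if_E11[OF F A_F that(1) p q that(2,3)] .
  show "maxcol1 A = CARD('n) powr (1 - inv_exp q) * opnorm F p q A" if "E11 F p q A"
    using maxcol1_eq_if_E11[OF that F' p q] .
  show "E11 F p q A"
    if "\<exists>j. \<forall>i. norm (A$i$j) = CARD('n) powr (- inv_exp q) * opnorm F p q A"
    using that E11_if_column_const_norm[OF F' \<open>1 \<le> p\<close> \<open>1 \<le> q\<close>] by blast
  show "E11 F p q A \<longleftrightarrow>
      (\<exists>j. (\<forall>k. k \<noteq> j \<longrightarrow> (\<forall>i. A$i$k = 0)) \<and> (\<exists>c. \<forall>i. norm (A$i$j) = c))"
    if "2 < p \<and> A \<noteq> 0"
    using that single_nonzero_column_if_E11[OF F A_F _ _ q]
      E11_if_single_column_const_norm[OF F' \<open>1 \<le> p\<close> \<open>1 \<le> q\<close>] by metis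
qed

end
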